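(* Consider one execution of the Modified NCB algorithm with inputs $k$ and $W$, where $\sqrt T\le W\le T$, and assume $968kS\le T$. On the event $E$, no arm $j$ with $\mu_j\le\frac{\mu^*}{64}$ is pulled in any round of Phase 2.
   Context: Bandit setup: $k$ arms, arm $i$ a distribution on $[0,1]$ with mean $\mu_i$, $\mu^*:=\max_i\mu_i>0$. $\log$ is the natural logarithm; $c:=3$; $T$ is the overall horizon and $S:=\frac{c^2\log T}{\mu^*}$. Modified NCB algorithm (inputs $k$, window $W$): maintain counts $n_i$ and empirical means $\widehat\mu_i$ (both initially $0$), round index $t=1$. Phase 1: while $\max_i n_i\widehat\mu_i\le 420c^2\log W$ and $t\le W$, pull a uniformly random arm, update, increment $t$. Phase 2: while $t\le W$, pull an arm maximizing $\overline{\mathrm{NCB}}_i:=\widehat\mu_i+2c\sqrt{2\widehat\mu_i\log W/n_i}$ (ties arbitrary), update, increment $t$. Canonical model: a $k\times T$ table $(Y_{i,s})$ of independent entries with $Y_{i,s}$ distributed as arm $i$, the $s$-th pull of arm $i$ yielding $Y_{i,s}$; $\widehat\mu_{i,s}:=\frac1s\sum_{r=1}^sY_{i,r}$. The uniform choices in Phase 1 are $U_1,U_2,\dots$, independent uniform in $[k]$ (independent of the table). Events: $E_1$: for every integer $r$ with $128kS\le r\le T$ and every arm $i$, the number of $r'\le r$ with $U_{r'}=i$ is at least $\frac{r}{2k}$ and at most $\frac{3r}{2k}$. $E_2$: for every arm $i$ with $\mu_i>\frac{\mu^*}{64}$ and every integer $s$ with $64S\le s\le T$, $|\mu_i-\widehat\mu_{i,s}|\le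 c\sqrt{\frac{\mu_i\log T}{s}}$. $E_3$: for every arm $j$ with $\mu_j\le\frac{\mu^*}{64}$ and every integer $s$ with $64S\le s\le T$, $\widehat\mu_{j,s}<\frac{\mu^*}{32}$. $E:=E_1\cap E_2\cap E_3$. *)

theory Defs
  imports Complex_Main
begin

text \<open>Arms are indexed by 1..k; rounds by 1..W. The canonical model table is Y i s
  (s-th pull of arm i, s >= 1); U r is the r-th uniform choice. A (deterministic)
  execution of Modified NCB is a pull sequence a :: nat => nat (a t = arm pulled in
  round t) consistent with the algorithm for some resolution of ties.\<close>

definition ncb_c :: real where "ncb_c = 3"

definition mu_star :: "nat \<Rightarrow> (nat \<Rightarrow> real) \<Rightarrow> real" where
  "mu_star k mu = Max (mu ` {1..k})"

definition S_param :: "nat \<Rightarrow> real \<Rightarrow> real" where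
  "S_param T mustar = ncb_c ^ 2 * ln (real T) / mustar"

definition emp_mean :: "(nat \<Rightarrow> nat \<Rightarrow> real) \<Rightarrow> nat \<Rightarrow> nat \<Rightarrow> real" where
  "emp_mean Y i s = (\<Sum>r=1..s. Y i r) / real s"

definition cnt :: "(nat \<Rightarrow> nat) \<Rightarrow> nat \<Rightarrow> nat \<Rightarrow> nat" where
  "cnt a i t = card {r \<in> {1..<t}. a r = i}"

definition muhat :: "(nat \<Rightarrow> nat \<Rightarrow> real) \<Rightarrow> (nat \<Rightarrow> nat) \<Rightarrow> nat \<Rightarrow> nat \<Rightarrow> real" where
  "muhat Y a i t = emp_mean Y i (cnt a i t)"

definition phase1_cond :: "nat \<Rightarrow> nat \<Rightarrow> (nat \<Rightarrow> nat \<Rightarrow> real) \<Rightarrow> (nat \<Rightarrow> nat) \<Rightarrow> nat \<Rightarrow> bool" where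
  "phase1_cond k W Y a t =
     (Max ((\<lambda>i. real (cnt a i t) * muhat Y a i t) ` {1..k}) \<le> 420 * ncb_c ^ 2 * ln (real W))"

text \<open>round t belongs to Phase 1 iff the Phase-1 condition held at the start of every
  round 1..t (once it fails, the algorithm moves to Phase 2 for good)\<close>
definition in_phase1 :: "nat \<Rightarrow> nat \<Rightarrow> (nat \<Rightarrow> nat \<Rightarrow> real) \<Rightarrow> (nat \<Rightarrow> nat) \<Rightarrow> nat \<Rightarrow> bool" where
  "in_phase1 k W Y a t = (\<forall>t'\<in>{1..t}. phase1_cond k W Y a t')"

definition ncb_index :: "nat \<Rightarrow> (nat \<Rightarrow> nat \<Rightarrow> real) \<Rightarrow> (nat \<Rightarrow> nat) \<Rightarrow> nat \<Rightarrow> nat \<Rightarrow> real" where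
  "ncb_index W Y a i t =
     muhat Y a i t + 2 * ncb_c * sqrt (2 * muhat Y a i t * ln (real W) / real (cnt a i t))"

definition is_execution ::
  "nat \<Rightarrow> nat \<Rightarrow> (nat \<Rightarrow> nat \<Rightarrow> real) \<Rightarrow> (nat \<Rightarrow> nat) \<Rightarrow> (nat \<Rightarrow> nat) \<Rightarrow> bool" where
  "is_execution k W Y U a =
     (\<forall>t\<in>{1..W}.
        (in_phase1 k W Y a t \<longrightarrow> a t = U t) \<and>
        (\<not> in_phase1 k W Y a t \<longrightarrow>
           a t \<in> {1..k} \<and> (\<forall>i\<in>{1..k}. ncb_index W Y a i t \<le> ncb_index W Y a (a t) t)))"

definition event_E1 :: "nat \<Rightarrow> nat \<Rightarrow> real \<Rightarrow> (nat \<Rightarrow> nat) \<Rightarrow> bool" where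
  "event_E1 k T S U =
     (\<forall>r::nat. 128 * real k * S \<le> real r \<and> r \<le> T \<longrightarrow>
        (\<forall>i\<in>{1..k}. real r / (2 * real k) \<le> real (card {r'\<in>{1..r}. U r' = i}) \<and>
                     real (card {r'\<in>{1..r}. U r' = i}) \<le> 3 * real r / (2 * real k)))"

definition event_E2 :: "nat \<Rightarrow> nat \<Rightarrow> (nat \<Rightarrow> real) \<Rightarrow> (nat \<Rightarrow> nat \<Rightarrow> real) \<Rightarrow> bool" where
  "event_E2 k T mu Y =
     (\<forall>i\<in>{1..k}. mu i > mu_star k mu / 64 \<longrightarrow>
        (\<forall>s::nat. 1 \<le> s \<and> 64 * S_param T (mu_star k mu) \<le> real s \<and> s \<le> T \<longrightarrow>
           \<bar>mu i - emp_mean Y i s\<bar> \<le> ncb_c * sqrt (mu i * ln (real T) / real s)))"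

definition event_E3 :: "nat \<Rightarrow> nat \<Rightarrow> (nat \<Rightarrow> real) \<Rightarrow> (nat \<Rightarrow> nat \<Rightarrow> real) \<Rightarrow> bool" where
  "event_E3 k T mu Y =
     (\<forall>j\<in>{1..k}. mu j \<le> mu_star k mu / 64 \<longrightarrow>
        (\<forall>s::nat. 1 \<le> s \<and> 64 * S_param T (mu_star k mu) \<le> real s \<and> s \<le> T \<longrightarrow>
           emp_mean Y j s < mu_star k mu / 32))"

definition event_E :: "nat \<Rightarrow> nat \<Rightarrow> (nat \<Rightarrow> real) \<Rightarrow> (nat \<Rightarrow> nat \<Rightarrow> real) \<Rightarrow> (nat \<Rightarrow> nat) \<Rightarrow> bool" where
  "event_E k T mu Y U =
     (event_E1 k T (S_param T (mu_star k mu)) U \<and> event_E2 k T mu Y \<and> event_E3 k T mu Y)"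

end

theory Submission
  imports Defs
begin

text \<open>Phase 1 cannot end before round \<open>128kS\<close>: up to then, by \<open>E\<^sub>1\<close>, no arm has been
  drawn more than about \<open>192S\<close> times, and by \<open>E\<^sub>2\<close>/\<open>E\<^sub>3\<close> the rewards it collected sum to at
  most \<open>1890 log T \<le> 420c\<^sup>2 log W\<close> (as \<open>W \<ge> \<surd>T\<close>), so the Phase-1 test still passes.
  Consequently, by \<open>E\<^sub>1\<close> again, every arm has at least \<open>64S\<close> pulls at the start of any
  Phase-2 round. With that many samples \<open>E\<^sub>3\<close> pushes the NCB index of an arm with
  \<open>\<mu>\<^sub>j \<le> \<mu>\<^sup>*/64\<close> below \<open>3\<mu>\<^sup>*/32\<close>, while \<open>E\<^sub>2\<close> keeps the empirical mean, and hence the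
  index, of an optimal arm above \<open>7\<mu>\<^sup>*/8\<close>; so the bad arm never maximizes the index.\<close>

lemma ln_2_ge_half: "1/2 \<le> ln (2::real)"
  using ln_le_minus_one[of "1/2::real"] by (simp add: ln_div)

lemma small_mean_index_bound:
  fixes m ms n L lw :: real
  assumes "0 \<le> m" "m < ms / 32" "576 * L / ms \<le> n" "0 < L" "0 \<le> lw" "lw \<le> L" "0 < ms"
  shows "m + 6 * sqrt (2 * m * lw / n) < 3 * ms / 32"
proof -
  have n_pos: "0 < n" using assms divide_pos_pos[of "576 * L" ms] by linarith
  have "2 * m * lw \<le> 2 * (ms / 32) * L" using assms by (intro mult_mono) auto
  then have "2 * m * lw / n \<le> ms * L / 16 / n" using n_pos by (intro divide_right_mono) auto
  also have "\<dots> \<le> ms * L / 16 / (576 * L / ms)"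
    using assms n_pos by (intro divide_left_mono) auto
  also have "\<dots> = (ms / 96)\<^sup>2" using assms by (simp add: field_simps power2_eq_square)
  finally have "sqrt (2 * m * lw / n) \<le> ms / 96" using assms by (intro real_le_lsqrt) auto
  then show ?thesis using assms by linarith
qed

lemma concentrated_mean_lower_bound:
  fixes m ms n L :: real
  assumes "\<bar>ms - m\<bar> \<le> 3 * sqrt (ms * L / n)" "576 * L / ms \<le> n" "0 < L" "0 < ms"
  shows "7 * ms / 8 \<le> m"
proof -
  have n_pos: "0 < n" using assms divide_pos_pos[of "576 * L" ms] by linarith
  have "ms * L / n \<le> ms * L / (576 * L / ms)"
    using assms n_pos by (intro divide_left_mono) auto
  also have "\<dots> = (ms / 24)\<^sup>2" using assms by (simp add: field_simps power2_eq_square)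
  finally have "sqrt (ms * L / n) \<le> ms / 24" using assms by (intro real_le_lsqrt) auto
  then show ?thesis using assms by linarith
qed

lemma scaled_mean_le_of_concentrated:
  fixes s e mu ms L :: real
  assumes "0 < s" "\<bar>mu - e\<bar> \<le> 3 * sqrt (mu * L / s)" "0 \<le> mu" "mu \<le> ms" "0 \<le> L"
  shows "s * e \<le> s * ms + 3 * sqrt (ms * L * s)"
proof -
  have "s * e \<le> s * mu + 3 * (s * sqrt (mu * L / s))"
    using assms mult_left_mono[of e "mu + 3 * sqrt (mu * L / s)" s]
    by (simp add: algebra_simps)
  also have "s * sqrt (mu * L / s) = sqrt (s\<^sup>2 * (mu * L / s))"
    using assms by (simp only: real_sqrt_mult real_sqrt_abs abs_of_pos)
  also have "s\<^sup>2 * (mu * L / s) = mu * L * s"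
    using assms by (simp add: power2_eq_square)
  also have "s * mu + 3 * sqrt (mu * L * s) \<le> s * ms + 3 * sqrt (ms * L * s)"
    using assms by (intro add_mono mult_left_mono real_sqrt_le_mono mult_right_mono) auto
  finally show ?thesis .
qed

lemma linear_plus_sqrt_bound:
  fixes s ms L :: real
  assumes "0 \<le> s" "s \<le> 1728 * L / ms + 5/2" "0 < ms" "ms \<le> 1" "1/10 \<le> L"
  shows "s * ms + 3 * sqrt (ms * L * s) \<le> 1890 * L"
proof -
  have lin: "s * ms \<le> 1728 * L + 5/2"
  proof -
    have "s * ms \<le> (1728 * L / ms + 5/2) * ms" using assms by (intro mult_right_mono) auto
    also have "\<dots> = 1728 * L + 5/2 * ms" using assms by (simp add: field_simps)
    finally show ?thesis using assms by linarith
  qed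
  have "ms * L * s \<le> L * (1728 * L + 5/2)"
    using lin assms mult_left_mono[OF lin, of L] by (simp add: algebra_simps)
  also have "\<dots> \<le> (42 * L)\<^sup>2" using assms by (simp add: power2_eq_square algebra_simps)
  finally have "sqrt (ms * L * s) \<le> 42 * L" using assms by (intro real_le_lsqrt) auto
  then show ?thesis using lin assms by linarith
qed

lemma cnt_mono: "t \<le> t' \<Longrightarrow> cnt a i t \<le> cnt a i t'"
  unfolding cnt_def by (rule card_mono) auto

lemma cnt_le_pred: "cnt a i t \<le> t - 1"
proof -
  have "cnt a i t \<le> card {1..<t}" unfolding cnt_def by (rule card_mono) auto
  then show ?thesis by simp
qed

lemma cnt_eq_card_choices:
  assumes "\<forall>r\<in>{1..<t}. a r = U r"
  shows "cnt a i t = card {r \<in> {1..t - 1}. U r = i}"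
proof -
  have "{r \<in> {1..<t}. a r = i} = {r \<in> {1..t - 1}. U r = i}" using assms by auto
  then show ?thesis unfolding cnt_def by simp
qed

lemma of_nat_mult_emp_mean: "real n * emp_mean Y i n = (\<Sum>r=1..n. Y i r)"
  unfolding emp_mean_def by (cases "n = 0") auto

lemma emp_mean_nonneg: "\<forall>s\<ge>1. 0 \<le> Y i s \<Longrightarrow> 0 \<le> emp_mean Y i n"
  unfolding emp_mean_def by (auto intro!: sum_nonneg divide_nonneg_nonneg)

lemma ln_of_nat_nonneg: "0 \<le> ln (real n)"
  by (cases n) auto

lemma muhat_le_ncb_index: "0 \<le> muhat Y a i t \<Longrightarrow> muhat Y a i t \<le> ncb_index W Y a i t"
  unfolding ncb_index_def ncb_c_def using ln_of_nat_nonneg[of W] by simp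

lemma phase1_cond_first_round: "1 \<le> k \<Longrightarrow> phase1_cond k W Y a 1"
proof -
  assume "1 \<le> k"
  then have "(\<lambda>i. real (cnt a i 1) * muhat Y a i 1) ` {1..k} = {0}" unfolding cnt_def by auto
  then show ?thesis unfolding phase1_cond_def ncb_c_def using ln_of_nat_nonneg[of W] by simp
qed

lemma phase1_exit:
  assumes "\<not> in_phase1 k W Y a t"
  obtains t0 where "t0 \<in> {1..t}" "\<not> phase1_cond k W Y a t0"
    "\<forall>r\<in>{1..<t0}. in_phase1 k W Y a r"
proof -
  define P where "P t0 \<longleftrightarrow> t0 \<in> {1..t} \<and> \<not> phase1_cond k W Y a t0" for t0
  define t0 where "t0 = (LEAST t0. P t0)"
  have "\<exists>t0. P t0" using assms unfolding in_phase1_def P_def by auto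
  then have first: "P t0" unfolding t0_def by (rule LeastI_ex)
  have "in_phase1 k W Y a r" if "r \<in> {1..<t0}" for r
    unfolding in_phase1_def
  proof
    fix t' assume "t' \<in> {1..r}"
    then have "t' < t0" "t' \<in> {1..t}" using that first unfolding P_def by auto
    then show "phase1_cond k W Y a t'" using not_less_Least[of t' P] unfolding t0_def P_def by blast
  qed
  then show ?thesis using that first unfolding P_def by blast
qed

lemma ln_le_twice_ln_of_sqrt_le:
  assumes "sqrt (real T) \<le> real W"
  shows "ln (real T) \<le> 2 * ln (real W)"
proof (cases "T = 0")
  case False
  then have "0 < sqrt (real T)" by simp
  moreover have "0 < real W" using calculation assms by linarith
  ultimately have "ln (sqrt (real T)) \<le> ln (real W)" using assms by simp
  then show ?thesis using False by (simp add: ln_sqrt)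
qed (simp add: ln_of_nat_nonneg)

locale ncb_run =
  fixes k W T :: nat and mu :: "nat \<Rightarrow> real" and Y :: "nat \<Rightarrow> nat \<Rightarrow> real"
    and U a :: "nat \<Rightarrow> nat"
  assumes k_pos: "1 \<le> k"
    and mu_range: "\<forall>i\<in>{1..k}. 0 \<le> mu i \<and> mu i \<le> 1"
    and mustar_pos: "mu_star k mu > 0"
    and Y_nonneg: "\<forall>i\<in>{1..k}. \<forall>s\<ge>1. 0 \<le> Y i s"
    and W_lower: "sqrt (real T) \<le> real W"
    and W_upper: "W \<le> T"
    and T_large: "968 * real k * S_param T (mu_star k mu) \<le> real T"
    and onE: "event_E k T mu Y U"
    and exec: "is_execution k W Y U a"
begin

abbreviation mustar :: real where "mustar \<equiv> mu_star k mu"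

abbreviation S :: real where "S \<equiv> S_param T mustar"

lemma mustar_attained: obtains i0 where "i0 \<in> {1..k}" "mu i0 = mustar"
proof -
  have "mustar \<in> mu ` {1..k}" unfolding mu_star_def using k_pos by (intro Max_in) auto
  then show ?thesis using that by (auto simp: image_iff)
qed

lemma mu_le_mustar: "i \<in> {1..k} \<Longrightarrow> mu i \<le> mustar"
  unfolding mu_star_def by (intro Max_ge) auto

lemma mustar_le_1: "mustar \<le> 1"
proof -
  obtain i0 where "i0 \<in> {1..k}" "mu i0 = mustar" by (rule mustar_attained)
  with mu_range show ?thesis by metis
qed

lemma S_eq: "S = 9 * ln (real T) / mustar"
  unfolding S_param_def ncb_c_def by simp

lemma sixty_four_S_eq: "64 * S = 576 * ln (real T) / mustar"
  unfolding S_eq by simp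

lemma ln_T_ge_half:
  assumes "2 \<le> T" shows "1/2 \<le> ln (real T)"
proof -
  have "ln 2 \<le> ln (real T)" using assms by simp
  then show ?thesis using ln_2_ge_half by linarith
qed

lemma S_ge_9_ln_T: "9 * ln (real T) \<le> S"
  using mustar_pos mustar_le_1 ln_of_nat_nonneg[of T] unfolding S_eq
  by (simp add: field_simps mult_left_le_one_le)

lemma S_nonneg: "0 \<le> S"
  using S_ge_9_ln_T ln_of_nat_nonneg[of T] by linarith

lemma phase1_follows_choices: "t \<in> {1..W} \<Longrightarrow> in_phase1 k W Y a t \<Longrightarrow> a t = U t"
  using exec unfolding is_execution_def by blast

lemma choice_count_bounds:
  assumes "128 * real k * S \<le> real r" "r \<le> T" "i \<in> {1..k}"
  shows "real r / (2 * real k) \<le> real (card {r' \<in> {1..r}. U r' = i})"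
    and "real (card {r' \<in> {1..r}. U r' = i}) \<le> 3 * real r / (2 * real k)"
  using onE assms unfolding event_E_def event_E1_def by blast+

lemma emp_mean_concentrated:
  assumes "i \<in> {1..k}" "mustar / 64 < mu i" "1 \<le> s" "64 * S \<le> real s" "s \<le> T"
  shows "\<bar>mu i - emp_mean Y i s\<bar> \<le> 3 * sqrt (mu i * ln (real T) / real s)"
  using onE assms unfolding event_E_def event_E2_def ncb_c_def by blast

lemma emp_mean_small:
  assumes "j \<in> {1..k}" "mu j \<le> mustar / 64" "1 \<le> s" "64 * S \<le> real s" "s \<le> T"
  shows "emp_mean Y j s < mustar / 32"
  using onE assms unfolding event_E_def event_E3_def by blast

lemma scaled_emp_mean_le:
  assumes "i \<in> {1..k}" "1 \<le> s" "64 * S \<le> real s" "s \<le> T"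
  shows "real s * emp_mean Y i s \<le> real s * mustar + 3 * sqrt (mustar * ln (real T) * real s)"
proof (cases "mustar / 64 < mu i")
  case True
  then show ?thesis
    using assms emp_mean_concentrated mu_range mu_le_mustar ln_of_nat_nonneg[of T]
    by (intro scaled_mean_le_of_concentrated) auto
next
  case False
  then have "emp_mean Y i s < mustar / 32" using assms by (intro emp_mean_small) auto
  then have "real s * emp_mean Y i s \<le> real s * mustar"
    using mustar_pos by (intro mult_left_mono) auto
  moreover have "0 \<le> sqrt (mustar * ln (real T) * real s)"
    using mustar_pos ln_of_nat_nonneg[of T] by simp
  ultimately show ?thesis by linarith
qed

lemma reward_sum_le:
  assumes "i \<in> {1..k}" "2 \<le> T" "real n \<le> 192 * S + 3/2"
  shows "(\<Sum>r=1..n. Y i r) \<le> 1890 * ln (real T)"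
proof -
  define s where "s = nat \<lceil>192 * S + 3/2\<rceil>"
  have ln_T: "1/2 \<le> ln (real T)" using assms(2) by (rule ln_T_ge_half)
  have s_ge: "192 * S + 3/2 \<le> real s" and s_lt: "real s < 192 * S + 5/2"
    unfolding s_def using S_nonneg by linarith+
  have "S \<le> real k * S" using k_pos S_nonneg mult_right_mono[of 1 "real k" S] by simp
  then have "real s \<le> real T" using s_lt S_ge_9_ln_T ln_T T_large by linarith
  then have s: "1 \<le> s" "64 * S \<le> real s" "s \<le> T" using s_ge S_nonneg by auto
  have "(\<Sum>r=1..n. Y i r) \<le> (\<Sum>r=1..s. Y i r)"
    using assms(1,3) s_ge Y_nonneg by (intro sum_mono2) auto
  also have "\<dots> = real s * emp_mean Y i s" by (rule of_nat_mult_emp_mean[symmetric])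
  also have "\<dots> \<le> real s * mustar + 3 * sqrt (mustar * ln (real T) * real s)"
    using assms(1) s by (rule scaled_emp_mean_le)
  also have "\<dots> \<le> 1890 * ln (real T)"
    using s_lt ln_T mustar_pos mustar_le_1 unfolding S_eq by (intro linear_plus_sqrt_bound) auto
  finally show ?thesis .
qed

lemma choice_count_le_of_short_phase1:
  assumes "i \<in> {1..k}" "\<forall>r\<in>{1..<t0}. a r = U r" "real (t0 - 1) < 128 * real k * S"
  shows "real (cnt a i t0) \<le> 192 * S + 3/2"
proof -
  define r0 where "r0 = nat \<lceil>128 * real k * S\<rceil>"
  have r0_ge: "128 * real k * S \<le> real r0" and r0_lt: "real r0 < 128 * real k * S + 1"
    unfolding r0_def using S_nonneg by auto linarith
  have "r0 \<le> T" unfolding r0_def using T_large S_nonneg by (simp add: nat_le_iff ceiling_le)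
  then have "real (card {r \<in> {1..r0}. U r = i}) \<le> 3 * real r0 / (2 * real k)"
    using r0_ge assms(1) by (intro choice_count_bounds)
  moreover have "cnt a i t0 \<le> card {r \<in> {1..r0}. U r = i}"
    unfolding cnt_eq_card_choices[OF assms(2)] using assms(3) r0_ge by (intro card_mono) auto
  moreover have "3 * real r0 / (2 * real k) \<le> 192 * S + 3/2"
    using r0_lt k_pos by (simp add: field_simps)
  ultimately show ?thesis by linarith
qed

lemma phase1_long:
  assumes "2 \<le> T" "\<not> phase1_cond k W Y a t0" "\<forall>r\<in>{1..<t0}. a r = U r"
  shows "128 * real k * S \<le> real (t0 - 1)"
proof (rule ccontr)
  assume short: "\<not> ?thesis"
  obtain i where i: "i \<in> {1..k}"
    and big: "420 * ncb_c ^ 2 * ln (real W) < real (cnt a i t0) * muhat Y a i t0"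
    using assms(2) k_pos unfolding phase1_cond_def by (auto simp: Max_le_iff not_le)
  have "real (cnt a i t0) * muhat Y a i t0 = (\<Sum>r=1..cnt a i t0. Y i r)"
    unfolding muhat_def by (rule of_nat_mult_emp_mean)
  also have "\<dots> \<le> 1890 * ln (real T)"
    using i assms(1,3) short by (intro reward_sum_le choice_count_le_of_short_phase1) auto
  also have "\<dots> \<le> 420 * ncb_c ^ 2 * ln (real W)"
    using ln_le_twice_ln_of_sqrt_le[OF W_lower] unfolding ncb_c_def by simp
  finally show False using big by linarith
qed

lemma phase2_T_ge_2:
  assumes "t \<in> {1..W}" "\<not> in_phase1 k W Y a t"
  shows "2 \<le> T"
proof -
  have "t \<noteq> 1" using assms(2) phase1_cond_first_round[OF k_pos] unfolding in_phase1_def by auto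
  then show ?thesis using assms(1) W_upper by auto
qed

lemma phase2_counts_large:
  assumes "t \<in> {1..W}" "\<not> in_phase1 k W Y a t" "i \<in> {1..k}"
  shows "64 * S \<le> real (cnt a i t)" "1 \<le> cnt a i t" "cnt a i t \<le> T"
proof -
  have T: "2 \<le> T" using assms(1,2) by (rule phase2_T_ge_2)
  obtain t0 where t0: "t0 \<in> {1..t}" "\<not> phase1_cond k W Y a t0"
    and before: "\<forall>r\<in>{1..<t0}. in_phase1 k W Y a r"
    using assms(2) by (rule phase1_exit)
  have follows: "\<forall>r\<in>{1..<t0}. a r = U r"
    using before t0(1) assms(1) phase1_follows_choices by auto
  have long: "128 * real k * S \<le> real (t0 - 1)"
    using T t0(2) follows by (rule phase1_long)
  have "real (t0 - 1) / (2 * real k) \<le> real (card {r \<in> {1..t0 - 1}. U r = i})"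
    using long t0(1) assms(1,3) W_upper by (intro choice_count_bounds) auto
  moreover have "64 * S \<le> real (t0 - 1) / (2 * real k)"
    using long k_pos by (simp add: field_simps)
  moreover have "cnt a i t0 \<le> cnt a i t" using t0(1) by (intro cnt_mono) auto
  ultimately show "64 * S \<le> real (cnt a i t)" using cnt_eq_card_choices[OF follows, of i] by simp
  then show "1 \<le> cnt a i t" using S_ge_9_ln_T ln_T_ge_half[OF T] by (cases "cnt a i t") auto
  show "cnt a i t \<le> T" using cnt_le_pred[of a i t] assms(1) W_upper by auto
qed

lemma phase2_bad_arm_index_small:
  assumes "t \<in> {1..W}" "\<not> in_phase1 k W Y a t" "j \<in> {1..k}" "mu j \<le> mustar / 64"
  shows "ncb_index W Y a j t < 3 * mustar / 32"
proof -
  have T: "2 \<le> T" using assms(1,2) by (rule phase2_T_ge_2)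
  have n: "64 * S \<le> real (cnt a j t)" "1 \<le> cnt a j t" "cnt a j t \<le> T"
    using assms(1-3) by (rule phase2_counts_large)+
  have "muhat Y a j t < mustar / 32"
    unfolding muhat_def using assms(3,4) n by (intro emp_mean_small) auto
  moreover have "0 \<le> muhat Y a j t"
    unfolding muhat_def using Y_nonneg assms(3) by (intro emp_mean_nonneg) auto
  moreover have "ln (real W) \<le> ln (real T)" using assms(1) W_upper by simp
  ultimately have "muhat Y a j t
      + 6 * sqrt (2 * muhat Y a j t * ln (real W) / real (cnt a j t)) < 3 * mustar / 32"
    using n(1) ln_T_ge_half[OF T] ln_of_nat_nonneg[of W] mustar_pos unfolding sixty_four_S_eq
    by (intro small_mean_index_bound) auto
  then show ?thesis unfolding ncb_index_def ncb_c_def by simp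
qed

lemma phase2_best_arm_index_large:
  assumes "t \<in> {1..W}" "\<not> in_phase1 k W Y a t" "i0 \<in> {1..k}" "mu i0 = mustar"
  shows "7 * mustar / 8 \<le> ncb_index W Y a i0 t"
proof -
  have T: "2 \<le> T" using assms(1,2) by (rule phase2_T_ge_2)
  have n: "64 * S \<le> real (cnt a i0 t)" "1 \<le> cnt a i0 t" "cnt a i0 t \<le> T"
    using assms(1-3) by (rule phase2_counts_large)+
  have "\<bar>mustar - muhat Y a i0 t\<bar> \<le> 3 * sqrt (mustar * ln (real T) / real (cnt a i0 t))"
    unfolding muhat_def using emp_mean_concentrated[of i0 "cnt a i0 t"] assms(3,4) n mustar_pos
    by simp
  then have "7 * mustar / 8 \<le> muhat Y a i0 t"
    using n(1) ln_T_ge_half[OF T] mustar_pos unfolding sixty_four_S_eq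
    by (intro concentrated_mean_lower_bound[where L = "ln (real T)"]) auto
  also have "\<dots> \<le> ncb_index W Y a i0 t"
    using calculation mustar_pos by (intro muhat_le_ncb_index) auto
  finally show ?thesis .
qed

lemma no_bad_arm_in_phase2:
  assumes "t \<in> {1..W}" "\<not> in_phase1 k W Y a t" "j \<in> {1..k}" "mu j \<le> mustar / 64"
  shows "a t \<noteq> j"
proof
  assume pulled: "a t = j"
  obtain i0 where i0: "i0 \<in> {1..k}" "mu i0 = mustar" by (rule mustar_attained)
  have "ncb_index W Y a i0 t \<le> ncb_index W Y a j t"
    using exec assms(1,2) i0(1) pulled unfolding is_execution_def by blast
  moreover have "ncb_index W Y a j t < 3 * mustar / 32"
    using assms by (rule phase2_bad_arm_index_small)
  moreover have "7 * mustar / 8 \<le> ncb_index W Y a i0 t"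
    using assms(1,2) i0 by (rule phase2_best_arm_index_large)
  ultimately show False using mustar_pos by linarith
qed

end

theorem lemma10:
  fixes k W T :: nat and mu :: "nat \<Rightarrow> real" and Y :: "nat \<Rightarrow> nat \<Rightarrow> real"
    and U a :: "nat \<Rightarrow> nat"
  assumes k_pos: "1 \<le> k"
    and mu_range: "\<forall>i\<in>{1..k}. 0 \<le> mu i \<and> mu i \<le> 1"
    and mustar_pos: "mu_star k mu > 0"
    and Y_range: "\<forall>i\<in>{1..k}. \<forall>s\<ge>1. 0 \<le> Y i s \<and> Y i s \<le> 1"
    and U_range: "\<forall>r\<ge>1. U r \<in> {1..k}"
    and W_lower: "sqrt (real T) \<le> real W"
    and W_upper: "W \<le> T"
    and T_large: "968 * real k * S_param T (mu_star k mu) \<le> real T"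
    and onE: "event_E k T mu Y U"
    and exec: "is_execution k W Y U a"
  shows "\<forall>t\<in>{1..W}. \<not> in_phase1 k W Y a t \<longrightarrow>
           (\<forall>j\<in>{1..k}. mu j \<le> mu_star k mu / 64 \<longrightarrow> a t \<noteq> j)"
proof -
  interpret ncb_run k W T mu Y U a
    using assms by unfold_locales auto
  show ?thesis using no_bad_arm_in_phase2 by blast
qed

end
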